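(* Let $d \geq 2$ and $n_1,\dots,n_d \geq 1$ be integers, and let $G_1$ and $G_2$ be graphs each having at least one edge. Then $K_{n_1,\dots,n_d}$ is isomorphic to a subgraph of $G_1\times G_2$ if and only if there exist positive integers $a_1,\dots,a_d,b_1,\dots,b_d$ such that $K_{a_1,\dots,a_d}$ is isomorphic to a subgraph of $G_1$, $K_{b_1,\dots,b_d}$ is isomorphic to a subgraph of $G_2$, and $n_i \leq a_ib_i$ for all $i\in\{1,\dots,d\}$.
   Context: The direct product $G_1 \times G_2$ has vertex set $V(G_1)\times V(G_2)$, with $(a,v)(b,u)$ an edge iff $ab\in E(G_1)$ and $uv\in E(G_2)$. $K_{n_1,\dots,n_d}$ denotes the complete $d$-partite graph with parts of sizes $n_1,\dots,n_d$. *)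

theory Defs
  imports Main
begin

definition graph :: "'a set \<Rightarrow> ('a \<Rightarrow> 'a \<Rightarrow> bool) \<Rightarrow> bool" where
  "graph V E \<longleftrightarrow> finite V \<and> (\<forall>u v. E u v \<longrightarrow> u \<in> V \<and> v \<in> V)
     \<and> (\<forall>u v. E u v \<longrightarrow> E v u) \<and> (\<forall>v. \<not> E v v)"

definition prod_edges :: "('a \<Rightarrow> 'a \<Rightarrow> bool) \<Rightarrow> ('b \<Rightarrow> 'b \<Rightarrow> bool)
    \<Rightarrow> ('a \<times> 'b) \<Rightarrow> ('a \<times> 'b) \<Rightarrow> bool" where
  "prod_edges E1 E2 x y \<longleftrightarrow> E1 (fst x) (fst y) \<and> E2 (snd x) (snd y)"

definition subgraph_iso :: "'a set \<Rightarrow> ('a \<Rightarrow> 'a \<Rightarrow> bool) \<Rightarrow> 'b set \<Rightarrow> ('b \<Rightarrow> 'b \<Rightarrow> bool) \<Rightarrow> bool" where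
  "subgraph_iso VH EH VG EG \<longleftrightarrow> (\<exists>f. inj_on f VH \<and> f ` VH \<subseteq> VG \<and>
      (\<forall>u\<in>VH. \<forall>v\<in>VH. EH u v \<longrightarrow> EG (f u) (f v)))"

definition KV :: "nat \<Rightarrow> (nat \<Rightarrow> nat) \<Rightarrow> (nat \<times> nat) set" where
  "KV d n = {(i, j). i \<in> {1..d} \<and> j < n i}"

definition KE :: "nat \<Rightarrow> (nat \<Rightarrow> nat) \<Rightarrow> (nat \<times> nat) \<Rightarrow> (nat \<times> nat) \<Rightarrow> bool" where
  "KE d n x y \<longleftrightarrow> x \<in> KV d n \<and> y \<in> KV d n \<and> fst x \<noteq> fst y"

end

theory Submission
  imports Defs
begin

text \<open>An embedding of a complete \<open>d\<close>-partite graph is the same thing as \<open>d\<close> vertex sets that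
are pairwise completely joined and large enough: images of the parts give such sets, and
conversely, since the edge relation is irreflexive, vertices from different sets are distinct,
so injections of the parts into the sets glue to an injective embedding. In \<open>G\<^sub>1 \<times> G\<^sub>2\<close>
a completely joined family \<open>P\<^sub>i\<close> projects to completely joined families \<open>A\<^sub>i\<close>, \<open>B\<^sub>i\<close> with
\<open>P\<^sub>i \<subseteq> A\<^sub>i \<times> B\<^sub>i\<close>, so \<open>n\<^sub>i \<le> |A\<^sub>i| |B\<^sub>i|\<close>; conversely the products \<open>A\<^sub>i \<times> B\<^sub>i\<close> of completely joined
families are completely joined.\<close>

definition completely_joined :: "nat \<Rightarrow> ('a \<Rightarrow> 'a \<Rightarrow> bool) \<Rightarrow> (nat \<Rightarrow> 'a set) \<Rightarrow> bool" where
  "completely_joined d E A \<longleftrightarrow>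
     (\<forall>i\<in>{1..d}. \<forall>i'\<in>{1..d}. i \<noteq> i' \<longrightarrow> (\<forall>x\<in>A i. \<forall>y\<in>A i'. E x y))"

lemma completely_joined_image_parts:
  assumes "\<forall>u\<in>KV d n. \<forall>v\<in>KV d n. KE d n u v \<longrightarrow> E (f u) (f v)"
  shows "completely_joined d E (\<lambda>i. f ` ({i} \<times> {..<n i}))"
  using assms unfolding completely_joined_def KV_def KE_def by fastforce

lemma completely_joined_imp_subgraph_iso:
  assumes irrefl: "irreflp E"
    and joined: "completely_joined d E A"
    and sets: "\<forall>i\<in>{1..d}. A i \<subseteq> V \<and> finite (A i) \<and> n i \<le> card (A i)"
  shows "subgraph_iso (KV d n) (KE d n) V E"
proof -
  have "\<forall>i\<in>{1..d}. \<exists>\<phi>. \<phi> ` {..<n i} \<subseteq> A i \<and> inj_on \<phi> {..<n i}"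
    using sets by (simp add: card_le_inj)
  then obtain \<phi> where \<phi>: "\<And>i. i \<in> {1..d} \<Longrightarrow> \<phi> i ` {..<n i} \<subseteq> A i \<and> inj_on (\<phi> i) {..<n i}"
    by metis
  define f where "f = (\<lambda>(i, j). \<phi> i j)"
  have f_in: "f (i, j) \<in> A i" if "(i, j) \<in> KV d n" for i j
    using that \<phi>[of i] unfolding KV_def f_def by auto
  have f_edge: "E (f u) (f v)" if "u \<in> KV d n" "v \<in> KV d n" "fst u \<noteq> fst v" for u v
    using that f_in joined unfolding completely_joined_def KV_def by fastforce
  have "inj_on f (KV d n)"
  proof (rule inj_onI)
    fix u v assume u: "u \<in> KV d n" and v: "v \<in> KV d n" and eq: "f u = f v"
    have "fst u = fst v"
      using f_edge[OF u v] eq irrefl by (auto dest: irreflpD)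
    with u v eq \<phi>[of "fst u"] show "u = v"
      unfolding KV_def f_def inj_on_def by auto
  qed
  moreover have "f ` KV d n \<subseteq> V"
    using f_in sets unfolding KV_def by fastforce
  moreover have "\<forall>u\<in>KV d n. \<forall>v\<in>KV d n. KE d n u v \<longrightarrow> E (f u) (f v)"
    using f_edge unfolding KE_def by blast
  ultimately show ?thesis
    unfolding subgraph_iso_def by blast
qed

lemma subgraph_iso_iff_completely_joined:
  assumes irrefl: "irreflp E"
  shows "subgraph_iso (KV d n) (KE d n) V E \<longleftrightarrow>
    (\<exists>A. completely_joined d E A \<and> (\<forall>i\<in>{1..d}. A i \<subseteq> V \<and> finite (A i) \<and> n i \<le> card (A i)))"
proof
  assume "subgraph_iso (KV d n) (KE d n) V E"
  then obtain f where inj: "inj_on f (KV d n)" and into: "f ` KV d n \<subseteq> V"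
    and edges: "\<forall>u\<in>KV d n. \<forall>v\<in>KV d n. KE d n u v \<longrightarrow> E (f u) (f v)"
    unfolding subgraph_iso_def by blast
  have part: "{i} \<times> {..<n i} \<subseteq> KV d n" if "i \<in> {1..d}" for i
    using that unfolding KV_def by auto
  have "f ` ({i} \<times> {..<n i}) \<subseteq> V \<and> finite (f ` ({i} \<times> {..<n i}))
      \<and> n i \<le> card (f ` ({i} \<times> {..<n i}))" if "i \<in> {1..d}" for i
    using card_image[OF inj_on_subset[OF inj part[OF that]]] into part[OF that] by auto
  with completely_joined_image_parts[where E = E, OF edges]
  show "\<exists>A. completely_joined d E A \<and> (\<forall>i\<in>{1..d}. A i \<subseteq> V \<and> finite (A i) \<and> n i \<le> card (A i))"
    by (intro exI[of _ "\<lambda>i. f ` ({i} \<times> {..<n i})"]) simp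
next
  assume "\<exists>A. completely_joined d E A \<and> (\<forall>i\<in>{1..d}. A i \<subseteq> V \<and> finite (A i) \<and> n i \<le> card (A i))"
  then show "subgraph_iso (KV d n) (KE d n) V E"
    using completely_joined_imp_subgraph_iso[OF irrefl] by blast
qed

lemma completely_joined_prod_edges:
  assumes "completely_joined d E1 A" and "completely_joined d E2 B"
  shows "completely_joined d (prod_edges E1 E2) (\<lambda>i. A i \<times> B i)"
  using assms unfolding completely_joined_def prod_edges_def by auto

lemma irreflp_prod_edges: "irreflp E1 \<Longrightarrow> irreflp (prod_edges E1 E2)"
  unfolding irreflp_def prod_edges_def by blast

lemma completely_joined_fst:
  assumes "completely_joined d (prod_edges E1 E2) P"
  shows "completely_joined d E1 (\<lambda>i. fst ` P i)"
  using assms unfolding completely_joined_def prod_edges_def by blast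

lemma completely_joined_snd:
  assumes "completely_joined d (prod_edges E1 E2) P"
  shows "completely_joined d E2 (\<lambda>i. snd ` P i)"
  using assms unfolding completely_joined_def prod_edges_def by blast

lemma card_le_card_fst_times_card_snd:
  assumes "finite P"
  shows "card P \<le> card (fst ` P) * card (snd ` P)"
proof -
  have "P \<subseteq> fst ` P \<times> snd ` P"
    by force
  then have "card P \<le> card (fst ` P \<times> snd ` P)"
    using assms by (intro card_mono) auto
  then show ?thesis
    by (simp add: card_cartesian_product)
qed

lemma subgraph_iso_prod_edges_factor:
  assumes "irreflp E1" and "irreflp E2"
    and "subgraph_iso (KV d n) (KE d n) (V1 \<times> V2) (prod_edges E1 E2)"
  shows "\<exists>a b. (\<forall>i\<in>{1..d}. n i \<le> a i * b i)
    \<and> subgraph_iso (KV d a) (KE d a) V1 E1 \<and> subgraph_iso (KV d b) (KE d b) V2 E2"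
proof -
  obtain P where joined: "completely_joined d (prod_edges E1 E2) P"
    and P: "\<forall>i\<in>{1..d}. P i \<subseteq> V1 \<times> V2 \<and> finite (P i) \<and> n i \<le> card (P i)"
    using assms(3) subgraph_iso_iff_completely_joined[OF irreflp_prod_edges[OF assms(1)]] by blast
  have "n i \<le> card (fst ` P i) * card (snd ` P i)" if "i \<in> {1..d}" for i
    using P that card_le_card_fst_times_card_snd le_trans by blast
  moreover have "subgraph_iso (KV d (\<lambda>i. card (fst ` P i))) (KE d (\<lambda>i. card (fst ` P i))) V1 E1"
    using completely_joined_fst[OF joined] P
    unfolding subgraph_iso_iff_completely_joined[OF assms(1)] by force
  moreover have "subgraph_iso (KV d (\<lambda>i. card (snd ` P i))) (KE d (\<lambda>i. card (snd ` P i))) V2 E2"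
    using completely_joined_snd[OF joined] P
    unfolding subgraph_iso_iff_completely_joined[OF assms(2)] by force
  ultimately show ?thesis
    by (intro exI[of _ "\<lambda>i. card (fst ` P i)"] exI[of _ "\<lambda>i. card (snd ` P i)"]) simp
qed

lemma subgraph_iso_prod_edges_combine:
  assumes "irreflp E1" and "irreflp E2"
    and ab: "\<forall>i\<in>{1..d}. n i \<le> a i * b i"
    and "subgraph_iso (KV d a) (KE d a) V1 E1" and "subgraph_iso (KV d b) (KE d b) V2 E2"
  shows "subgraph_iso (KV d n) (KE d n) (V1 \<times> V2) (prod_edges E1 E2)"
proof -
  obtain A where A: "completely_joined d E1 A"
    "\<forall>i\<in>{1..d}. A i \<subseteq> V1 \<and> finite (A i) \<and> a i \<le> card (A i)"
    using assms(1,4) subgraph_iso_iff_completely_joined by blast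
  obtain B where B: "completely_joined d E2 B"
    "\<forall>i\<in>{1..d}. B i \<subseteq> V2 \<and> finite (B i) \<and> b i \<le> card (B i)"
    using assms(2,5) subgraph_iso_iff_completely_joined by blast
  have "A i \<times> B i \<subseteq> V1 \<times> V2 \<and> finite (A i \<times> B i) \<and> n i \<le> card (A i \<times> B i)"
    if i: "i \<in> {1..d}" for i
  proof -
    have "n i \<le> card (A i) * card (B i)"
      using ab A(2) B(2) i by (meson le_trans mult_le_mono)
    then show ?thesis
      using A(2) B(2) i by (auto simp: card_cartesian_product)
  qed
  with completely_joined_prod_edges[OF A(1) B(1)] show ?thesis
    unfolding subgraph_iso_iff_completely_joined[OF irreflp_prod_edges[OF assms(1)]]
    by (intro exI[of _ "\<lambda>i. A i \<times> B i"]) simp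
qed

theorem mainTheorem2:
  fixes d :: nat and n :: "nat \<Rightarrow> nat"
    and V1 :: "'a set" and E1 :: "'a \<Rightarrow> 'a \<Rightarrow> bool"
    and V2 :: "'b set" and E2 :: "'b \<Rightarrow> 'b \<Rightarrow> bool"
  assumes "d \<ge> 2"
    and "\<forall>i\<in>{1..d}. n i \<ge> 1"
    and "graph V1 E1" and "graph V2 E2"
    and "\<exists>u v. E1 u v" and "\<exists>u v. E2 u v"
  shows "subgraph_iso (KV d n) (KE d n) (V1 \<times> V2) (prod_edges E1 E2) \<longleftrightarrow>
    (\<exists>a b :: nat \<Rightarrow> nat. (\<forall>i\<in>{1..d}. a i \<ge> 1 \<and> b i \<ge> 1 \<and> n i \<le> a i * b i)
       \<and> subgraph_iso (KV d a) (KE d a) V1 E1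
       \<and> subgraph_iso (KV d b) (KE d b) V2 E2)"
proof -
  have irrefl: "irreflp E1" "irreflp E2"
    using assms(3,4) unfolding graph_def irreflp_def by auto
  have positive: "a \<ge> 1 \<and> b \<ge> 1" if "1 \<le> m" "m \<le> a * b" for m a b :: nat
    using that by (cases "a = 0 \<or> b = 0") auto
  show ?thesis
  proof
    assume "subgraph_iso (KV d n) (KE d n) (V1 \<times> V2) (prod_edges E1 E2)"
    then obtain a b where "\<forall>i\<in>{1..d}. n i \<le> a i * b i"
      and "subgraph_iso (KV d a) (KE d a) V1 E1" "subgraph_iso (KV d b) (KE d b) V2 E2"
      using subgraph_iso_prod_edges_factor[OF irrefl] by blast
    with assms(2) positive show "\<exists>a b. (\<forall>i\<in>{1..d}. a i \<ge> 1 \<and> b i \<ge> 1 \<and> n i \<le> a i * b i)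
       \<and> subgraph_iso (KV d a) (KE d a) V1 E1 \<and> subgraph_iso (KV d b) (KE d b) V2 E2"
      by blast
  qed (use subgraph_iso_prod_edges_combine[OF irrefl] in blast)
qed

end
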